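(* Let $G=(V,E)$ be a graph, $v\in V$, $d\geq 1$, and suppose $r_d(G)\geq r_d(G-v)+d+t$ for some $t\geq 0$. Then $$\mathrm{rc}^*_d(G,v)\geq d+\frac{t(\deg(v)-d+1)-d(d+1)}{2(\deg(v)+1)}.$$
   Context: $r_d$ is the rank function of the $d$-dimensional generic rigidity matroid $\mathcal{R}_d$ (linear independence of rows of the rigidity matrix of a generic $d$-dimensional framework); $r_d(H)$ is the rank of $E(H)$. Let $\pi$ be a uniformly random ordering of $V$, $T_v^\pi$ the set of vertices preceding $v$ in $\pi$, $E_v$ the set of edges incident with $v$, and $E_v^\pi=\{vu\in E_v: u\in T_v^\pi\}$. Define $\mathrm{rc}^*_d(G,v,\pi)=r_d(G-E_v+E_v^\pi)-r_d(G-v)$ and $\mathrm{rc}^*_d(G,v)=\mathbb{E}(\mathrm{rc}^*_d(G,v,\pi))$. *)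

theory Defs
  imports Complex_Main
begin

definition is_graph :: "'a set \<Rightarrow> 'a set set \<Rightarrow> bool" where
  "is_graph V E \<longleftrightarrow> finite V \<and> (\<forall>e\<in>E. e \<subseteq> V \<and> card e = 2)"

definition inc_edges :: "'a set set \<Rightarrow> 'a \<Rightarrow> 'a set set" where
  "inc_edges E v = {e\<in>E. v \<in> e}"

definition degree :: "'a set set \<Rightarrow> 'a \<Rightarrow> nat" where
  "degree E v = card (inc_edges E v)"

(* Row of the rigidity matrix of the d-dimensional framework p (coordinates
   p w i, i < d) corresponding to the edge e = {w,u}: entry at (w,i) is
   p w i - p u i, entries at vertices not in e are 0. *)
definition rig_row :: "('a \<Rightarrow> nat \<Rightarrow> real) \<Rightarrow> 'a set \<Rightarrow> 'a \<Rightarrow> nat \<Rightarrow> real" where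
  "rig_row p e w i = (if w \<in> e then p w i - p (THE u. u \<in> e \<and> u \<noteq> w) i else 0)"

definition rows_indep :: "nat \<Rightarrow> ('a \<Rightarrow> nat \<Rightarrow> real) \<Rightarrow> 'a set set \<Rightarrow> bool" where
  "rows_indep d p F \<longleftrightarrow> finite F \<and>
     (\<forall>c :: 'a set \<Rightarrow> real.
        (\<forall>w i. i < d \<longrightarrow> (\<Sum>e\<in>F. c e * rig_row p e w i) = 0) \<longrightarrow> (\<forall>e\<in>F. c e = 0))"

(* independence in the generic d-dimensional rigidity matroid: rows independent
   for a generic framework, equivalently for some framework (generic
   frameworks maximise the rank of every row subset). *)
definition rig_indep :: "nat \<Rightarrow> 'a set set \<Rightarrow> bool" where
  "rig_indep d F \<longleftrightarrow> (\<exists>p. rows_indep d p F)"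

definition rig_rank :: "nat \<Rightarrow> 'a set set \<Rightarrow> nat" where
  "rig_rank d E = Max (card ` {F. F \<subseteq> E \<and> rig_indep d F})"

definition orderings :: "'a set \<Rightarrow> 'a list set" where
  "orderings V = {xs. distinct xs \<and> set xs = V}"

definition preceding :: "'a list \<Rightarrow> 'a \<Rightarrow> 'a set" where
  "preceding \<pi> v = {\<pi> ! i | i j. i < j \<and> j < length \<pi> \<and> \<pi> ! j = v}"

definition inc_edges_pi :: "'a set set \<Rightarrow> 'a \<Rightarrow> 'a list \<Rightarrow> 'a set set" where
  "inc_edges_pi E v \<pi> = {e \<in> inc_edges E v. \<exists>u \<in> preceding \<pi> v. e = {v, u}}"

definition rc_star_pi :: "nat \<Rightarrow> 'a set set \<Rightarrow> 'a \<Rightarrow> 'a list \<Rightarrow> real" where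
  "rc_star_pi d E v \<pi> =
     real (rig_rank d ((E - inc_edges E v) \<union> inc_edges_pi E v \<pi>))
     - real (rig_rank d (E - inc_edges E v))"

definition rc_star :: "nat \<Rightarrow> 'a set \<Rightarrow> 'a set set \<Rightarrow> 'a \<Rightarrow> real" where
  "rc_star d V E v =
     (\<Sum>\<pi>\<in>orderings V. rc_star_pi d E v \<pi>) / real (card (orderings V))"

end

(*
  Let N be the neighbourhood of v and H = G - E_v. For U \<subseteq> N let \<Psi>(U) be the rank gained by
  adding to H the edges from v to U. Computing ranks in a framework that is generic for the
  finitely many edge sets involved (independence fails only on the zero set of a nonzero Gram
  determinant along a line of frameworks), \<Psi> is submodular with increments at most 1, equals
  |U| when |U| \<le> d (0-extension), and \<Psi>(N) \<ge> d + t.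

  rc*(G,v) is the mean of \<Psi>(neighbours preceding v) over random orderings. Restricting
  the ordering to N \<union> {v} and viewing it as a random ordering of N with v inserted at a uniform
  position, this is the mean of \<Psi> over the k + 1 prefixes of a random ordering of N, k = |N|.
  In terms of the expected marginal gains D_0 \<ge> D_1 \<ge> ... \<ge> D_(k-1), which are at most 1,
  equal 1 for i < d and sum to at least d + t, this mean is (\<Sum>i<k. (k - i) D_i) / (k + 1),
  and Chebyshev's sum inequality bounds it from below.
*)

theory Submission
  imports "Jordan_Normal_Form.Determinant" "HOL-Library.Function_Algebras" Defs
begin

section \<open>Uniformly random orderings\<close>

lemma length_orderings: "\<sigma> \<in> orderings A \<Longrightarrow> length \<sigma> = card A"
  unfolding orderings_def using distinct_card by fastforce

lemma finite_orderings: "finite A \<Longrightarrow> finite (orderings A)"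
proof -
  assume "finite A"
  have "orderings A \<subseteq> {xs. set xs \<subseteq> A \<and> length xs \<le> card A}"
    using length_orderings unfolding orderings_def by fastforce
  then show ?thesis
    using finite_lists_length_le[OF \<open>finite A\<close>] finite_subset by blast
qed

lemma card_orderings_pos: "finite A \<Longrightarrow> 0 < card (orderings A)"
  using finite_orderings finite_distinct_list
  by (fastforce simp: card_gt_0_iff orderings_def)

lemma preceding_append_Cons:
  assumes "distinct (xs @ v # ys)"
  shows "preceding (xs @ v # ys) v = set xs"
proof -
  let ?\<pi> = "xs @ v # ys"
  have at_v: "?\<pi> ! j = v \<longleftrightarrow> j = length xs" if "j < length ?\<pi>" for j
    using nth_eq_iff_index_eq[OF assms that, of "length xs"] by auto
  have "preceding ?\<pi> v = {?\<pi> ! i | i. i < length xs}"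
    unfolding preceding_def
  proof (intro equalityI subsetI)
    fix x assume "x \<in> {?\<pi> ! i | i j. i < j \<and> j < length ?\<pi> \<and> ?\<pi> ! j = v}"
    then show "x \<in> {?\<pi> ! i | i. i < length xs}"
      using at_v by auto
  next
    fix x assume "x \<in> {?\<pi> ! i | i. i < length xs}"
    then obtain i where "x = ?\<pi> ! i" "i < length xs"
      by blast
    then show "x \<in> {?\<pi> ! i | i j. i < j \<and> j < length ?\<pi> \<and> ?\<pi> ! j = v}"
      by (intro CollectI exI[of _ i] exI[of _ "length xs"]) auto
  qed
  also have "\<dots> = set xs"
    by (auto simp: set_conv_nth nth_append)
  finally show ?thesis .
qed

lemma preceding_filter:
  assumes "distinct \<pi>" "v \<in> set \<pi>" "P v" "\<And>u. u \<in> U \<Longrightarrow> P u"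
  shows "preceding (filter P \<pi>) v \<inter> U = preceding \<pi> v \<inter> U"
proof -
  obtain xs ys where \<pi>: "\<pi> = xs @ v # ys"
    using split_list[OF assms(2)] by blast
  have "filter P \<pi> = filter P xs @ v # filter P ys"
    using \<pi> assms(3) by simp
  moreover have "distinct (filter P xs @ v # filter P ys)"
    using assms(1) \<pi> by auto
  ultimately have "preceding (filter P \<pi>) v = set (filter P xs)"
    by (simp add: preceding_append_Cons)
  moreover have "preceding \<pi> v = set xs"
    using preceding_append_Cons assms(1) \<pi> by simp
  ultimately show ?thesis
    using assms(4) by auto
qed

lemma insert_at_injective:
  assumes "x \<notin> set \<sigma>" "x \<notin> set \<sigma>'" "j \<le> length \<sigma>" "j' \<le> length \<sigma>'"
    and "take j \<sigma> @ x # drop j \<sigma> = take j' \<sigma>' @ x # drop j' \<sigma>'"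
  shows "\<sigma> = \<sigma>' \<and> j = j'"
proof -
  have "x \<notin> set (take j \<sigma>)" "x \<notin> set (drop j \<sigma>)"
    using assms(1) by (auto dest: in_set_takeD in_set_dropD)
  then have "take j \<sigma> = take j' \<sigma>' \<and> drop j \<sigma> = drop j' \<sigma>'"
    by (rule append_Cons_eq_iff[THEN iffD1, OF _ _ assms(5)])
  moreover have "j = j'"
    using calculation assms(3,4) by (metis length_take min.absorb2)
  ultimately show ?thesis
    by (metis append_take_drop_id)
qed

lemma orderings_insert_bij:
  assumes "x \<notin> A"
  shows "bij_betw (\<lambda>(\<sigma>, j). take j \<sigma> @ x # drop j \<sigma>) (orderings A \<times> {..card A})
           (orderings (insert x A))"
proof (rule bij_betw_imageI)
  show "inj_on (\<lambda>(\<sigma>, j). take j \<sigma> @ x # drop j \<sigma>) (orderings A \<times> {..card A})"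
  proof (rule inj_onI)
    fix p q
    assume p: "p \<in> orderings A \<times> {..card A}" and q: "q \<in> orderings A \<times> {..card A}"
      and eq: "(\<lambda>(\<sigma>, j). take j \<sigma> @ x # drop j \<sigma>) p = (\<lambda>(\<sigma>, j). take j \<sigma> @ x # drop j \<sigma>) q"
    obtain \<sigma> j \<sigma>' j' where pq: "p = (\<sigma>, j)" "q = (\<sigma>', j')"
      by (cases p, cases q)
    have "\<sigma> = \<sigma>' \<and> j = j'"
    proof (rule insert_at_injective)
      show "x \<notin> set \<sigma>" "x \<notin> set \<sigma>'"
        using p q assms unfolding pq by (auto simp: orderings_def)
      show "j \<le> length \<sigma>" "j' \<le> length \<sigma>'"
        using p q unfolding pq by (auto simp: length_orderings)
      show "take j \<sigma> @ x # drop j \<sigma> = take j' \<sigma>' @ x # drop j' \<sigma>'"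
        using eq unfolding pq by simp
    qed
    then show "p = q"
      unfolding pq by simp
  qed
  show "(\<lambda>(\<sigma>, j). take j \<sigma> @ x # drop j \<sigma>) ` (orderings A \<times> {..card A}) = orderings (insert x A)"
  proof (intro equalityI subsetI)
    fix \<pi> assume "\<pi> \<in> (\<lambda>(\<sigma>, j). take j \<sigma> @ x # drop j \<sigma>) ` (orderings A \<times> {..card A})"
    then obtain \<sigma> j where \<sigma>: "distinct \<sigma>" "set \<sigma> = A" and \<pi>: "\<pi> = take j \<sigma> @ x # drop j \<sigma>"
      by (auto simp: orderings_def)
    have "distinct (take j \<sigma> @ drop j \<sigma>)"
      using \<sigma> by simp
    then have "distinct \<pi>"
      unfolding \<pi> using \<sigma> assms
      by (auto simp del: append_take_drop_id dest: in_set_takeD in_set_dropD)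
    moreover have "set (take j \<sigma>) \<union> set (drop j \<sigma>) = A"
      using \<sigma>(2) by (metis append_take_drop_id set_append)
    then have "set \<pi> = insert x A"
      unfolding \<pi> by auto
    ultimately show "\<pi> \<in> orderings (insert x A)"
      unfolding orderings_def by simp
  next
    fix \<pi> assume "\<pi> \<in> orderings (insert x A)"
    then have \<pi>: "distinct \<pi>" "set \<pi> = insert x A"
      by (auto simp: orderings_def)
    obtain xs ys where xs: "\<pi> = xs @ x # ys"
      using split_list[of x \<pi>] \<pi>(2) by blast
    have "distinct (xs @ ys)" "x \<notin> set xs" "x \<notin> set ys"
      using \<pi>(1) unfolding xs by auto
    moreover have "set (xs @ ys) = set \<pi> - {x}"
      using calculation(2,3) unfolding xs by auto
    ultimately have \<sigma>: "xs @ ys \<in> orderings A"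
      using \<pi>(2) assms unfolding orderings_def by auto
    show "\<pi> \<in> (\<lambda>(\<sigma>, j). take j \<sigma> @ x # drop j \<sigma>) ` (orderings A \<times> {..card A})"
    proof (rule image_eqI)
      show "\<pi> = (\<lambda>(\<sigma>, j). take j \<sigma> @ x # drop j \<sigma>) (xs @ ys, length xs)"
        using xs by simp
      show "(xs @ ys, length xs) \<in> orderings A \<times> {..card A}"
        using \<sigma> length_orderings[OF \<sigma>] by simp
    qed
  qed
qed

definition ordering_mean :: "'a set \<Rightarrow> ('a list \<Rightarrow> real) \<Rightarrow> real" where
  "ordering_mean A f = (\<Sum>\<sigma>\<in>orderings A. f \<sigma>) / real (card (orderings A))"

lemma ordering_mean_cong:
  "(\<And>\<sigma>. \<sigma> \<in> orderings A \<Longrightarrow> f \<sigma> = g \<sigma>) \<Longrightarrow> ordering_mean A f = ordering_mean A g"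
  unfolding ordering_mean_def by (metis sum.cong)

lemma ordering_mean_mono:
  "(\<And>\<sigma>. \<sigma> \<in> orderings A \<Longrightarrow> f \<sigma> \<le> g \<sigma>) \<Longrightarrow> ordering_mean A f \<le> ordering_mean A g"
  unfolding ordering_mean_def by (intro divide_right_mono sum_mono) auto

lemma ordering_mean_const: "finite A \<Longrightarrow> ordering_mean A (\<lambda>_. c) = c"
  unfolding ordering_mean_def using card_orderings_pos[of A] by simp

lemma ordering_mean_sum:
  "ordering_mean A (\<lambda>\<sigma>. \<Sum>i\<in>I. f i \<sigma>) = (\<Sum>i\<in>I. ordering_mean A (f i))"
  unfolding ordering_mean_def by (subst sum.swap) (simp add: sum_divide_distrib)

lemma ordering_mean_mult_left: "ordering_mean A (\<lambda>\<sigma>. c * f \<sigma>) = c * ordering_mean A f"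
  unfolding ordering_mean_def by (simp add: sum_distrib_left)

lemma ordering_mean_insert:
  assumes "x \<notin> A"
  shows "ordering_mean (insert x A) f =
    ordering_mean A (\<lambda>\<sigma>. \<Sum>j\<le>card A. f (take j \<sigma> @ x # drop j \<sigma>)) / real (card A + 1)"
proof -
  have sum: "(\<Sum>\<pi>\<in>orderings (insert x A). f \<pi>) =
      (\<Sum>\<sigma>\<in>orderings A. \<Sum>j\<le>card A. f (take j \<sigma> @ x # drop j \<sigma>))"
    using sum.reindex_bij_betw[OF orderings_insert_bij[OF assms], of f]
    by (simp add: sum.cartesian_product split_def)
  have card: "card (orderings (insert x A)) = card (orderings A) * (card A + 1)"
    using bij_betw_same_card[OF orderings_insert_bij[OF assms]] by (simp add: card_cartesian_product)
  show ?thesis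
    unfolding ordering_mean_def sum card by (simp add: divide_divide_eq_left algebra_simps)
qed

lemma ordering_mean_filter:
  assumes "finite B" "A \<subseteq> B"
  shows "ordering_mean B (\<lambda>\<pi>. f (filter (\<lambda>y. y \<in> A) \<pi>)) = ordering_mean A f"
proof -
  have "ordering_mean (A \<union> D) (\<lambda>\<pi>. f (filter (\<lambda>y. y \<in> A) \<pi>)) = ordering_mean A f"
    if "finite D" for D
    using that
  proof (induction D rule: finite_induct)
    case empty
    show ?case
      unfolding Un_empty_right by (rule ordering_mean_cong) (simp add: orderings_def filter_id_conv)
  next
    case (insert x D)
    show ?case
    proof (cases "x \<in> A")
      case True
      then show ?thesis
        using insert.IH by (simp add: insert_absorb)
    next
      case False
      then have x: "x \<notin> A \<union> D"
        using insert.hyps(2) by simp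
      have filter_insert: "filter (\<lambda>y. y \<in> A) (take j \<sigma> @ x # drop j \<sigma>) = filter (\<lambda>y. y \<in> A) \<sigma>"
        for j \<sigma>
      proof -
        have "filter (\<lambda>y. y \<in> A) (take j \<sigma> @ x # drop j \<sigma>) = filter (\<lambda>y. y \<in> A) (take j \<sigma> @ drop j \<sigma>)"
          using False by (simp only: filter_append filter.simps) simp
        then show ?thesis
          by simp
      qed
      have "A \<union> insert x D = insert x (A \<union> D)"
        by simp
      then have "ordering_mean (A \<union> insert x D) (\<lambda>\<pi>. f (filter (\<lambda>y. y \<in> A) \<pi>)) =
          ordering_mean (A \<union> D) (\<lambda>\<sigma>. \<Sum>j\<le>card (A \<union> D).
            f (filter (\<lambda>y. y \<in> A) (take j \<sigma> @ x # drop j \<sigma>))) / real (card (A \<union> D) + 1)"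
        by (simp only: ordering_mean_insert[OF x])
      also have "\<dots> = ordering_mean (A \<union> D)
          (\<lambda>\<sigma>. real (card (A \<union> D) + 1) * f (filter (\<lambda>y. y \<in> A) \<sigma>)) / real (card (A \<union> D) + 1)"
        unfolding filter_insert by simp
      also have "\<dots> = ordering_mean A f"
        by (simp add: ordering_mean_mult_left insert.IH del: of_nat_Suc)
      finally show ?thesis .
    qed
  qed
  moreover have "B = A \<union> (B - A)" "finite (B - A)"
    using assms by auto
  ultimately show ?thesis
    by metis
qed

lemma ordering_mean_swap_adjacent:
  assumes "Suc i < card A"
  shows "ordering_mean A (\<lambda>\<sigma>. f (\<sigma>[i := \<sigma> ! Suc i, Suc i := \<sigma> ! i])) = ordering_mean A f"
proof -
  define sw where "sw \<sigma> = \<sigma>[i := \<sigma> ! Suc i, Suc i := \<sigma> ! i]" for \<sigma> :: "'a list"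
  have sw: "sw \<sigma> \<in> orderings A" "sw (sw \<sigma>) = \<sigma>" if "\<sigma> \<in> orderings A" for \<sigma>
    using that length_orderings[OF that] assms
    by (auto simp: sw_def orderings_def list_eq_iff_nth_eq nth_list_update)
  have "bij_betw sw (orderings A) (orderings A)"
    by (rule bij_betw_byWitness[where f' = sw]) (use sw in auto)
  then show ?thesis
    unfolding ordering_mean_def sw_def[symmetric] using sum.reindex_bij_betw by metis
qed

section \<open>Averaging a submodular function over prefixes\<close>

lemma sum_atMost_sum_lessThan:
  fixes a :: "nat \<Rightarrow> 'b::comm_semiring_1"
  shows "(\<Sum>j\<le>k. \<Sum>i<j. a i) = (\<Sum>i<k. of_nat (k - i) * a i)"
proof (induction k)
  case (Suc k)
  have "(\<Sum>i<Suc k. of_nat (Suc k - i) * a i) = (\<Sum>i<k. of_nat (k - i) * a i + a i) + a k"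
    by (simp add: Suc_diff_le distrib_right add.commute)
  then show ?case
    using Suc by (simp add: sum.distrib add.assoc)
qed simp

lemma sum_lessThan_diff_weights:
  assumes "d \<le> k"
  shows "(\<Sum>i<d. real (k - i)) = real d * real k - real d * (real d - 1) / 2"
  using assms by (induction d) (simp_all add: of_nat_diff field_simps)

lemma Chebyshev_decreasing_weights_ge:
  fixes y :: "nat \<Rightarrow> real"
  assumes "\<And>i j. i \<le> j \<Longrightarrow> j < n \<Longrightarrow> y j \<le> y i"
  shows "(real n + 1) / 2 * (\<Sum>l<n. y l) \<le> (\<Sum>l<n. real (n - l) * y l)"
proof (cases "n = 0")
  case False
  have "real n * (\<Sum>l<n. (real l - real n) * y l) \<le> (\<Sum>l<n. real l - real n) * (\<Sum>l<n. y l)"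
    using Chebyshev_sum_upper[of n "\<lambda>l. real l - real n" y] assms
    by (simp add: atLeast0LessThan)
  moreover have "(\<Sum>l<n. real l - real n) = - (real n * (real n + 1) / 2)"
  proof -
    have "(\<Sum>l<n. real l - real n) = - (\<Sum>l<n. real (n - l))"
      by (simp add: sum_negf[symmetric] of_nat_diff)
    then show ?thesis
      using sum_lessThan_diff_weights[of n n] by (simp add: field_simps)
  qed
  moreover have "(\<Sum>l<n. (real l - real n) * y l) = - (\<Sum>l<n. real (n - l) * y l)"
    by (simp add: sum_negf[symmetric] of_nat_diff algebra_simps)
  ultimately have "real n * ((real n + 1) / 2 * (\<Sum>l<n. y l)) \<le> real n * (\<Sum>l<n. real (n - l) * y l)"
    by (simp add: algebra_simps)
  then show ?thesis
    using False by simp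
qed simp

text \<open>The weights \<open>k - i\<close> favour the first positions, where \<open>x\<close> is largest, so the weighted
  sum is at least the weights of the first \<open>d\<close> positions (where \<open>x = 1\<close>) plus the average
  remaining weight times the remaining mass \<open>t\<close>.\<close>

lemma decreasing_weighted_sum_ge:
  fixes x :: "nat \<Rightarrow> real"
  assumes "d \<le> k"
    and le_1: "\<And>i. i < k \<Longrightarrow> x i \<le> 1"
    and decreasing: "\<And>i. Suc i < k \<Longrightarrow> x (Suc i) \<le> x i"
    and head: "real d \<le> (\<Sum>i<d. x i)"
    and total: "real d + t \<le> (\<Sum>i<k. x i)"
  shows "real d * real k - real d * (real d - 1) / 2 + (real k - real d + 1) * t / 2
           \<le> (\<Sum>i<k. real (k - i) * x i)"
proof -
  have x_head: "x i = 1" if "i < d" for i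
  proof (rule ccontr)
    assume "x i \<noteq> 1"
    then have "x i < 1"
      using le_1[of i] that \<open>d \<le> k\<close> by simp
    then have "(\<Sum>i<d. x i) < (\<Sum>i<d. 1)"
      using that le_1 \<open>d \<le> k\<close> by (intro sum_strict_mono_ex1) auto
    then show False
      using head by simp
  qed
  define n where "n = k - d"
  define y where "y l = x (d + l)" for l
  have k: "k = d + n"
    using \<open>d \<le> k\<close> n_def by simp
  have split: "(\<Sum>i<d + n. f i) = (\<Sum>i<d. f i) + (\<Sum>l<n. f (d + l))" for f :: "nat \<Rightarrow> real"
    by (induction n) simp_all
  have weighted: "(\<Sum>i<k. real (k - i) * x i) = (\<Sum>i<d. real (k - i)) + (\<Sum>l<n. real (n - l) * y l)"
    unfolding k split y_def using x_head by simp
  have tail_mass: "t \<le> (\<Sum>l<n. y l)"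
    using total x_head unfolding k split y_def by simp
  have "y j \<le> y i" if "i \<le> j" "j < n" for i j
    using that
  proof (induction j)
    case (Suc j)
    then show ?case
      using decreasing[of "d + j"] k unfolding y_def by (cases "i = Suc j") auto
  qed simp
  then have "(real n + 1) / 2 * (\<Sum>l<n. y l) \<le> (\<Sum>l<n. real (n - l) * y l)"
    by (rule Chebyshev_decreasing_weights_ge)
  moreover have "(real k - real d + 1) * t / 2 = (real n + 1) / 2 * t"
    using k by (simp add: field_simps)
  moreover have "(real n + 1) / 2 * t \<le> (real n + 1) / 2 * (\<Sum>l<n. y l)"
    using tail_mass by (intro mult_left_mono) simp_all
  ultimately have "(real k - real d + 1) * t / 2 \<le> (\<Sum>l<n. real (n - l) * y l)"
    by linarith
  then show ?thesis
    using weighted sum_lessThan_diff_weights[OF \<open>d \<le> k\<close>] by linarith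
qed

lemma set_take_Suc_orderings:
  assumes "\<sigma> \<in> orderings A" "i < card A"
  shows "set (take (Suc i) \<sigma>) = insert (\<sigma> ! i) (set (take i \<sigma>))" "\<sigma> ! i \<in> A"
    "set (take i \<sigma>) \<subseteq> A"
  using assms length_orderings[OF assms(1)] set_take_subset[of i \<sigma>]
  by (auto simp: take_Suc_conv_app_nth orderings_def)

text \<open>The expected marginal gain \<open>D i\<close> of the \<open>i\<close>-th element of a random ordering decreases
  in \<open>i\<close> by submodularity, because swapping positions \<open>i\<close> and \<open>i + 1\<close> preserves the uniform
  distribution.\<close>

lemma ordering_mean_prefix_sums_ge:
  fixes \<Psi> :: "'a set \<Rightarrow> real" and N :: "'a set" and d :: nat and t :: real
  assumes fin: "finite N" and empty: "\<Psi> {} = 0"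
    and unit: "\<And>T a. T \<subseteq> N \<Longrightarrow> a \<in> N \<Longrightarrow> \<Psi> (insert a T) \<le> \<Psi> T + 1"
    and submod: "\<And>T a b. T \<subseteq> N \<Longrightarrow> a \<in> N \<Longrightarrow> b \<in> N \<Longrightarrow>
        \<Psi> (insert a (insert b T)) + \<Psi> T \<le> \<Psi> (insert a T) + \<Psi> (insert b T)"
    and small: "\<And>U. U \<subseteq> N \<Longrightarrow> card U \<le> d \<Longrightarrow> real (card U) \<le> \<Psi> U"
    and top: "real d + t \<le> \<Psi> N" and "0 \<le> t"
  shows "real d * real (card N) - real d * (real d - 1) / 2 + (real (card N) - real d + 1) * t / 2
           \<le> ordering_mean N (\<lambda>\<sigma>. \<Sum>j\<le>card N. \<Psi> (set (take j \<sigma>)))"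
proof -
  define k where "k = card N"
  define gain where "gain i \<sigma> = \<Psi> (set (take (Suc i) \<sigma>)) - \<Psi> (set (take i \<sigma>))" for i \<sigma>
  define D where "D i = ordering_mean N (gain i)" for i
  have prefix: "(\<Sum>i<j. D i) = ordering_mean N (\<lambda>\<sigma>. \<Psi> (set (take j \<sigma>)))" for j
  proof -
    have "(\<Sum>i<j. gain i \<sigma>) = \<Psi> (set (take j \<sigma>))" for \<sigma>
      unfolding gain_def using sum_lessThan_telescope[of "\<lambda>n. \<Psi> (set (take n \<sigma>))" j]
      by (simp add: empty)
    then show ?thesis
      unfolding D_def ordering_mean_sum[symmetric] by simp
  qed
  have D_le_1: "D i \<le> 1" if "i < k" for i
  proof -
    have "D i \<le> ordering_mean N (\<lambda>_. 1)"
      unfolding D_def gain_def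
    proof (rule ordering_mean_mono)
      fix \<sigma> assume \<sigma>: "\<sigma> \<in> orderings N"
      show "\<Psi> (set (take (Suc i) \<sigma>)) - \<Psi> (set (take i \<sigma>)) \<le> 1"
        using set_take_Suc_orderings[OF \<sigma>, of i] unit[of "set (take i \<sigma>)" "\<sigma> ! i"] that k_def
        by simp
    qed
    then show ?thesis
      using fin by (simp add: ordering_mean_const)
  qed
  have D_decreasing: "D (Suc i) \<le> D i" if i: "Suc i < k" for i
  proof -
    define sw where "sw \<sigma> = \<sigma>[i := \<sigma> ! Suc i, Suc i := \<sigma> ! i]" for \<sigma> :: "'a list"
    have "gain (Suc i) \<sigma> \<le> gain i (sw \<sigma>)" if \<sigma>: "\<sigma> \<in> orderings N" for \<sigma>
    proof -
      define T where "T = set (take i \<sigma>)"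
      have "length \<sigma> = k" "sw \<sigma> \<in> orderings N"
        using \<sigma> length_orderings[OF \<sigma>] i k_def by (auto simp: sw_def orderings_def)
      moreover have "take i (sw \<sigma>) = take i \<sigma>" "sw \<sigma> ! i = \<sigma> ! Suc i"
        using calculation(1) i by (simp_all add: sw_def nth_list_update)
      ultimately have "set (take (Suc i) (sw \<sigma>)) = insert (\<sigma> ! Suc i) T"
        using set_take_Suc_orderings(1)[of "sw \<sigma>" N i] i k_def unfolding T_def by simp
      moreover have "set (take (Suc i) \<sigma>) = insert (\<sigma> ! i) T"
        using set_take_Suc_orderings(1)[OF \<sigma>, of i] i k_def unfolding T_def by simp
      moreover from this have "set (take (Suc (Suc i)) \<sigma>) = insert (\<sigma> ! Suc i) (insert (\<sigma> ! i) T)"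
        using set_take_Suc_orderings(1)[OF \<sigma>, of "Suc i"] i k_def by simp
      moreover have "\<Psi> (insert (\<sigma> ! Suc i) (insert (\<sigma> ! i) T)) + \<Psi> T
          \<le> \<Psi> (insert (\<sigma> ! Suc i) T) + \<Psi> (insert (\<sigma> ! i) T)"
        using set_take_Suc_orderings(2,3)[OF \<sigma>] i k_def unfolding T_def by (intro submod) simp_all
      ultimately show ?thesis
        unfolding gain_def T_def \<open>take i (sw \<sigma>) = take i \<sigma>\<close> by simp
    qed
    then have "D (Suc i) \<le> ordering_mean N (\<lambda>\<sigma>. gain i (sw \<sigma>))"
      unfolding D_def by (rule ordering_mean_mono)
    also have "\<dots> = D i"
      unfolding D_def sw_def using i k_def by (simp add: ordering_mean_swap_adjacent)
    finally show ?thesis .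
  qed
  have D_total: "(\<Sum>i<k. D i) = \<Psi> N"
  proof -
    have "ordering_mean N (\<lambda>\<sigma>. \<Psi> (set (take k \<sigma>))) = ordering_mean N (\<lambda>_. \<Psi> N)"
      by (rule ordering_mean_cong) (simp add: k_def length_orderings[symmetric] orderings_def)
    then show ?thesis
      using fin by (simp add: prefix ordering_mean_const)
  qed
  have "d \<le> k"
  proof -
    have "(\<Sum>i<k. D i) \<le> (\<Sum>i<k. 1)"
      using D_le_1 by (intro sum_mono) simp
    then show ?thesis
      using D_total top \<open>0 \<le> t\<close> by simp
  qed
  have D_head: "real d \<le> (\<Sum>i<d. D i)"
  proof -
    have "ordering_mean N (\<lambda>_. real d) \<le> ordering_mean N (\<lambda>\<sigma>. \<Psi> (set (take d \<sigma>)))"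
    proof (rule ordering_mean_mono)
      fix \<sigma> assume \<sigma>: "\<sigma> \<in> orderings N"
      then have "card (set (take d \<sigma>)) = d" "set (take d \<sigma>) \<subseteq> N"
        using length_orderings[OF \<sigma>] \<open>d \<le> k\<close> set_take_subset[of d \<sigma>]
        by (auto simp: orderings_def distinct_card k_def)
      then show "real d \<le> \<Psi> (set (take d \<sigma>))"
        using small by force
    qed
    then show ?thesis
      using fin by (simp add: prefix ordering_mean_const)
  qed
  have "ordering_mean N (\<lambda>\<sigma>. \<Sum>j\<le>k. \<Psi> (set (take j \<sigma>))) = (\<Sum>i<k. real (k - i) * D i)"
    by (simp add: ordering_mean_sum prefix[symmetric] sum_atMost_sum_lessThan)
  then show ?thesis
    using decreasing_weighted_sum_ge[OF \<open>d \<le> k\<close> D_le_1 D_decreasing D_head] D_total top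
    unfolding k_def by simp
qed

lemma ordering_mean_preceding_ge:
  fixes \<Psi> :: "'a set \<Rightarrow> real" and N :: "'a set" and d :: nat and t :: real
  assumes "finite V" "v \<in> V" "N \<subseteq> V" "v \<notin> N"
    and restrict: "\<And>U. \<Psi> U = \<Psi> (U \<inter> N)"
    and "\<Psi> {} = 0"
    and "\<And>T a. T \<subseteq> N \<Longrightarrow> a \<in> N \<Longrightarrow> \<Psi> (insert a T) \<le> \<Psi> T + 1"
    and "\<And>T a b. T \<subseteq> N \<Longrightarrow> a \<in> N \<Longrightarrow> b \<in> N \<Longrightarrow>
        \<Psi> (insert a (insert b T)) + \<Psi> T \<le> \<Psi> (insert a T) + \<Psi> (insert b T)"
    and "\<And>U. U \<subseteq> N \<Longrightarrow> card U \<le> d \<Longrightarrow> real (card U) \<le> \<Psi> U"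
    and "real d + t \<le> \<Psi> N" and "0 \<le> t"
  shows "real d + (t * (real (card N) - real d + 1) - real d * (real d + 1)) / (2 * (real (card N) + 1))
           \<le> ordering_mean V (\<lambda>\<pi>. \<Psi> (preceding \<pi> v))"
proof -
  have fin: "finite N"
    using assms(1,3) finite_subset by blast
  have "ordering_mean V (\<lambda>\<pi>. \<Psi> (preceding \<pi> v)) =
      ordering_mean V (\<lambda>\<pi>. \<Psi> (preceding (filter (\<lambda>y. y \<in> insert v N) \<pi>) v))"
  proof (rule ordering_mean_cong)
    fix \<pi> assume "\<pi> \<in> orderings V"
    then have "preceding (filter (\<lambda>y. y \<in> insert v N) \<pi>) v \<inter> N = preceding \<pi> v \<inter> N"
      using assms(2) by (intro preceding_filter) (auto simp: orderings_def)
    then show "\<Psi> (preceding \<pi> v) = \<Psi> (preceding (filter (\<lambda>y. y \<in> insert v N) \<pi>) v)"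
      using restrict by metis
  qed
  also have "\<dots> = ordering_mean (insert v N) (\<lambda>\<tau>. \<Psi> (preceding \<tau> v))"
    using assms(1-3) by (intro ordering_mean_filter) auto
  also have "\<dots> = ordering_mean N (\<lambda>\<sigma>. \<Sum>j\<le>card N. \<Psi> (set (take j \<sigma>))) / real (card N + 1)"
  proof -
    have insert_preceding: "\<Psi> (preceding (take j \<sigma> @ v # drop j \<sigma>) v) = \<Psi> (set (take j \<sigma>))"
      if "\<sigma> \<in> orderings N" "j \<le> card N" for \<sigma> j
    proof -
      have "take j \<sigma> @ v # drop j \<sigma> \<in> orderings (insert v N)"
        using bij_betwE[OF orderings_insert_bij[OF assms(4)]] that by fastforce
      then show ?thesis
        by (simp add: orderings_def preceding_append_Cons)
    qed
    have "ordering_mean N (\<lambda>\<sigma>. \<Sum>j\<le>card N. \<Psi> (preceding (take j \<sigma> @ v # drop j \<sigma>) v)) =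
        ordering_mean N (\<lambda>\<sigma>. \<Sum>j\<le>card N. \<Psi> (set (take j \<sigma>)))"
      by (rule ordering_mean_cong, rule sum.cong) (simp_all add: insert_preceding)
    then show ?thesis
      unfolding ordering_mean_insert[OF assms(4)] by simp
  qed
  finally have mean: "ordering_mean V (\<lambda>\<pi>. \<Psi> (preceding \<pi> v)) =
      ordering_mean N (\<lambda>\<sigma>. \<Sum>j\<le>card N. \<Psi> (set (take j \<sigma>))) / real (card N + 1)" .
  have "real d + (t * (real (card N) - real d + 1) - real d * (real d + 1)) / (2 * (real (card N) + 1))
      = (real d * real (card N) - real d * (real d - 1) / 2 + (real (card N) - real d + 1) * t / 2)
          / real (card N + 1)"
    by (simp add: field_simps)
  also have "\<dots> \<le> ordering_mean N (\<lambda>\<sigma>. \<Sum>j\<le>card N. \<Psi> (set (take j \<sigma>))) / real (card N + 1)"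
    using fin assms(6-11) by (intro divide_right_mono) (rule ordering_mean_prefix_sums_ge, simp_all)
  finally show ?thesis
    unfolding mean .
qed

section \<open>The generic rigidity matroid\<close>

context vector_space
begin

lemma dim_insert_finite:
  assumes "finite S"
  shows "dim (insert x S) = (if x \<in> span S then dim S else dim S + 1)"
proof (cases "x \<in> span S")
  case True
  then show ?thesis
    by (metis dim_span span_redundant)
next
  case False
  obtain B where B: "B \<subseteq> span S" "independent B" "span S \<subseteq> span B" "card B = dim (span S)"
    using basis_exists[of "span S"] by blast
  have "finite B"
    using independent_span_bound[OF assms B(2)] B(1) by blast
  have "dim (span (insert x S)) = Suc (dim S)"
  proof (rule dim_unique)
    show "insert x B \<subseteq> span (insert x S)"
      by (meson B(1) insertI1 insert_subset order_trans span_base span_mono subset_insertI)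
    show "span (insert x S) \<subseteq> span (insert x B)"
      by (metis B(1,3) span_breakdown_eq span_subspace subsetI subspace_span)
    show "independent (insert x B)"
      by (metis B(1-3) independent_insert span_subspace subspace_span False)
    show "card (insert x B) = Suc (dim S)"
      using B(1,4) False \<open>finite B\<close> span_base by (force simp: dim_span)
  qed
  then show ?thesis
    by (metis False Suc_eq_plus1 dim_span)
qed

lemma dim_insert_le: "finite S \<Longrightarrow> dim (insert x S) \<le> dim S + 1"
  by (simp add: dim_insert_finite)

lemma dim_insert_submodular:
  assumes "finite S"
  shows "dim (insert a (insert b S)) + dim S \<le> dim (insert a S) + dim (insert b S)"
proof (cases "a \<in> span (insert b S)")
  case True
  then show ?thesis
    using assms by (simp add: dim_insert_finite)
next
  case False
  then have "a \<notin> span S"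
    using span_mono[of S "insert b S"] by blast
  then show ?thesis
    using False assms by (simp add: dim_insert_finite)
qed

lemma family_independent_iff:
  assumes "finite F"
  shows "(\<forall>c. (\<Sum>e\<in>F. scale (c e) (f e)) = 0 \<longrightarrow> (\<forall>e\<in>F. c e = 0)) \<longleftrightarrow>
    inj_on f F \<and> independent (f ` F)"
proof
  assume indep: "\<forall>c. (\<Sum>e\<in>F. scale (c e) (f e)) = 0 \<longrightarrow> (\<forall>e\<in>F. c e = 0)"
  show "inj_on f F \<and> independent (f ` F)"
  proof
    show "inj_on f F"
    proof (rule inj_onI, rule ccontr)
      fix a b assume ab: "a \<in> F" "b \<in> F" "f a = f b" "a \<noteq> b"
      define c where "c e = (if e = a then 1 else 0) - (if e = b then 1 else (0::'a))" for e
      have "(\<Sum>e\<in>F. scale (c e) (f e)) = (\<Sum>e\<in>F. scale (c e) (f a))"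
        using ab by (intro sum.cong) (auto simp: c_def)
      also have "\<dots> = scale (\<Sum>e\<in>F. c e) (f a)"
        by (rule scale_sum_left[symmetric])
      also have "\<dots> = 0"
        using ab assms by (simp add: c_def sum_subtractf)
      finally have "c a = 0"
        using indep ab(1) by blast
      then show False
        using ab(4) by (simp add: c_def)
    qed
    then show "independent (f ` F)"
      using indep assms by (auto simp: dependent_finite sum.reindex)
  qed
next
  assume inj_indep: "inj_on f F \<and> independent (f ` F)"
  show "\<forall>c. (\<Sum>e\<in>F. scale (c e) (f e)) = 0 \<longrightarrow> (\<forall>e\<in>F. c e = 0)"
  proof (intro allI impI ballI)
    fix c e assume zero: "(\<Sum>e\<in>F. scale (c e) (f e)) = 0" and e: "e \<in> F"
    define u where "u = c \<circ> the_inv_into F f"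
    have "(\<Sum>v\<in>f ` F. scale (u v) v) = 0"
      using inj_indep zero by (simp add: sum.reindex u_def the_inv_into_f_f)
    then have "u (f e) = 0"
      using inj_indep assms e by (intro independentD[of "f ` F" "f ` F"]) auto
    then show "c e = 0"
      using inj_indep e by (simp add: u_def the_inv_into_f_f)
  qed
qed

end

text \<open>Rows of the rigidity matrix are vectors in the space of real functions on
  vertex-coordinate pairs.\<close>

interpretation fun_vec: vector_space "\<lambda>(r::real) (f::'b \<Rightarrow> real) x. r * f x"
  by unfold_locales (auto simp: fun_eq_iff algebra_simps)

lemma sum_fun_apply: "(\<Sum>a\<in>A. f a) x = (\<Sum>a\<in>A. f a x)"
  by (induction A rule: infinite_finite_induct) auto

lemma rig_row_outside: "w \<notin> e \<Longrightarrow> rig_row p e w i = 0"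
  unfolding rig_row_def by simp

definition row_vector :: "nat \<Rightarrow> ('a \<Rightarrow> nat \<Rightarrow> real) \<Rightarrow> 'a set \<Rightarrow> 'a \<times> nat \<Rightarrow> real" where
  "row_vector d p e = (\<lambda>(w, i). if i < d then rig_row p e w i else 0)"

lemma rows_indep_iff_row_vectors:
  assumes "finite F"
  shows "rows_indep d p F \<longleftrightarrow> inj_on (row_vector d p) F \<and> fun_vec.independent (row_vector d p ` F)"
proof -
  have row: "(\<Sum>e\<in>F. c e * row_vector d p e (w, i)) =
      (if i < d then (\<Sum>e\<in>F. c e * rig_row p e w i) else 0)" for c w i
    by (cases "i < d") (simp_all add: row_vector_def)
  have "(\<Sum>e\<in>F. (\<lambda>x. c e * row_vector d p e x)) = 0 \<longleftrightarrow>
      (\<forall>w i. i < d \<longrightarrow> (\<Sum>e\<in>F. c e * rig_row p e w i) = 0)" for c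
    by (auto simp: fun_eq_iff sum_fun_apply row)
  then show ?thesis
    unfolding rows_indep_def using fun_vec.family_independent_iff[OF assms, of "row_vector d p"] assms
    by simp
qed

lemma rig_rank_attained:
  assumes "finite X"
  obtains F where "F \<subseteq> X" "rig_indep d F" "card F = rig_rank d X"
proof -
  have "rig_indep d {}"
    unfolding rig_indep_def rows_indep_def by simp
  then have "card ` {F. F \<subseteq> X \<and> rig_indep d F} \<noteq> {}"
    by blast
  moreover have "finite (card ` {F. F \<subseteq> X \<and> rig_indep d F})"
    using assms by simp
  ultimately have "rig_rank d X \<in> card ` {F. F \<subseteq> X \<and> rig_indep d F}"
    unfolding rig_rank_def by (intro Max_in)
  then obtain F where "F \<subseteq> X" "rig_indep d F" "rig_rank d X = card F"
    by (auto simp only: image_iff mem_Collect_eq)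
  then show ?thesis
    using that[of F] by simp
qed

lemma card_le_rig_rank:
  assumes "finite X" "F \<subseteq> X" "rig_indep d F"
  shows "card F \<le> rig_rank d X"
  unfolding rig_rank_def
proof (rule Max_ge)
  show "finite (card ` {F. F \<subseteq> X \<and> rig_indep d F})"
    using assms(1) by simp
  show "card F \<in> card ` {F. F \<subseteq> X \<and> rig_indep d F}"
    using assms(2,3) by simp
qed

lemma rig_rank_eq_dim:
  assumes fin: "finite X" and generic: "\<And>F. F \<subseteq> X \<Longrightarrow> rig_indep d F \<Longrightarrow> rows_indep d p F"
  shows "rig_rank d X = fun_vec.dim (row_vector d p ` X)"
proof -
  obtain B where B: "B \<subseteq> row_vector d p ` X" "fun_vec.independent B"
      "row_vector d p ` X \<subseteq> fun_vec.span B" "card B = fun_vec.dim (row_vector d p ` X)"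
    using fun_vec.basis_exists by blast
  have "finite B"
    using B(1) fin finite_surj by blast
  show ?thesis
  proof (rule antisym)
    obtain F where F: "F \<subseteq> X" "rig_indep d F" "card F = rig_rank d X"
      using rig_rank_attained[OF fin] .
    then have "finite F" "rows_indep d p F"
      using fin generic finite_subset by auto
    then have "inj_on (row_vector d p) F" "fun_vec.independent (row_vector d p ` F)"
      using rows_indep_iff_row_vectors by auto
    moreover have "row_vector d p ` F \<subseteq> fun_vec.span B"
      using B(3) F(1) by blast
    ultimately show "rig_rank d X \<le> fun_vec.dim (row_vector d p ` X)"
      using fun_vec.independent_span_bound[OF \<open>finite B\<close>] F(3) B(4) card_image by metis
  next
    obtain F where F: "F \<subseteq> X" "inj_on (row_vector d p) F" "B = row_vector d p ` F"
      using subset_image_inj[THEN iffD1, OF B(1)] by blast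
    have "finite F"
      using F(1) fin finite_subset by blast
    then have "rig_indep d F"
      using rows_indep_iff_row_vectors F B(2) unfolding rig_indep_def by blast
    then have "card F \<le> rig_rank d X"
      using card_le_rig_rank[OF fin F(1)] by simp
    then show "fun_vec.dim (row_vector d p ` X) \<le> rig_rank d X"
      using B(4) F(2,3) card_image by metis
  qed
qed


definition rows_indep_on :: "'a set \<Rightarrow> nat \<Rightarrow> ('a \<Rightarrow> nat \<Rightarrow> real) \<Rightarrow> 'a set set \<Rightarrow> bool" where
  "rows_indep_on W d p F \<longleftrightarrow> finite F \<and> (\<forall>c :: 'a set \<Rightarrow> real.
     (\<forall>w\<in>W. \<forall>i<d. (\<Sum>e\<in>F. c e * rig_row p e w i) = 0) \<longrightarrow> (\<forall>e\<in>F. c e = 0))"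

lemma rows_indep_on_UNIV: "rows_indep_on UNIV d p F \<longleftrightarrow> rows_indep d p F"
  unfolding rows_indep_on_def rows_indep_def by simp

lemma rows_indep_on_iff_nth:
  assumes "distinct es"
  shows "rows_indep_on W d p (set es) \<longleftrightarrow>
    (\<forall>c. (\<forall>x\<in>(W \<inter> \<Union>(set es)) \<times> {..<d}.
        (\<Sum>a<length es. c a * rig_row p (es ! a) (fst x) (snd x)) = 0) \<longrightarrow> (\<forall>a<length es. c a = 0))"
    (is "_ \<longleftrightarrow> (\<forall>c. ?zero c \<longrightarrow> _)")
proof -
  have sum_nth: "(\<Sum>e\<in>set es. g e) = (\<Sum>a<length es. g (es ! a))" for g :: "'a set \<Rightarrow> real"
    using sum.reindex_bij_betw[OF bij_betw_nth[OF assms refl refl], of g] by simp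
  have rows_zero_iff: "(\<forall>w\<in>W. \<forall>i<d. (\<Sum>e\<in>set es. c e * rig_row p e w i) = 0) \<longleftrightarrow>
      ?zero (\<lambda>a. c (es ! a))" for c
  proof
    assume "\<forall>w\<in>W. \<forall>i<d. (\<Sum>e\<in>set es. c e * rig_row p e w i) = 0"
    then show "?zero (\<lambda>a. c (es ! a))"
      using sum_nth[of "\<lambda>e. c e * rig_row p e _ _"] by auto
  next
    assume zero: "?zero (\<lambda>a. c (es ! a))"
    show "\<forall>w\<in>W. \<forall>i<d. (\<Sum>e\<in>set es. c e * rig_row p e w i) = 0"
    proof (intro ballI allI impI)
      fix w i assume "w \<in> W" "i < d"
      show "(\<Sum>e\<in>set es. c e * rig_row p e w i) = 0"
      proof (cases "w \<in> \<Union>(set es)")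
        case True
        then show ?thesis
          using zero \<open>w \<in> W\<close> \<open>i < d\<close> sum_nth[of "\<lambda>e. c e * rig_row p e w i"] by auto
      next
        case False
        then show ?thesis
          by (intro sum.neutral) (auto simp: rig_row_outside)
      qed
    qed
  qed
  show ?thesis
  proof
    assume indep: "rows_indep_on W d p (set es)"
    show "\<forall>c. ?zero c \<longrightarrow> (\<forall>a<length es. c a = 0)"
    proof (intro allI impI)
      fix c :: "nat \<Rightarrow> real" and a assume "?zero c" and a: "a < length es"
      define idx where "idx = the_inv_into {..<length es} ((!) es)"
      have c: "c b = c (idx (es ! b))" if "b < length es" for b
        using that bij_betw_imp_inj_on[OF bij_betw_nth[OF assms refl refl]]
        by (simp add: idx_def the_inv_into_f_f)
      have "?zero (\<lambda>b. c (idx (es ! b)))"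
        using \<open>?zero c\<close> c by simp
      then have "\<forall>w\<in>W. \<forall>i<d. (\<Sum>e\<in>set es. c (idx e) * rig_row p e w i) = 0"
        using rows_zero_iff[of "\<lambda>e. c (idx e)"] by simp
      then have "\<forall>e\<in>set es. c (idx e) = 0"
        using indep unfolding rows_indep_on_def by (elim conjE allE[where x = "\<lambda>e. c (idx e)"]) blast
      then show "c a = 0"
        using c a by simp
    qed
  next
    assume indep: "\<forall>c. ?zero c \<longrightarrow> (\<forall>a<length es. c a = 0)"
    show "rows_indep_on W d p (set es)"
      unfolding rows_indep_on_def
    proof (intro conjI finite_set allI impI ballI)
      fix c e assume "\<forall>w\<in>W. \<forall>i<d. (\<Sum>e\<in>set es. c e * rig_row p e w i) = 0" and e: "e \<in> set es"
      then have "\<forall>a<length es. c (es ! a) = 0"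
        using indep unfolding rows_zero_iff by (elim allE[where x = "\<lambda>a. c (es ! a)"]) blast
      then show "c e = 0"
        using e by (metis in_set_conv_nth)
    qed
  qed
qed

lemma gram_det_nonzero_iff:
  fixes r :: "nat \<Rightarrow> 'x \<Rightarrow> real"
  assumes "finite X"
  shows "det (mat m m (\<lambda>(a, b). \<Sum>x\<in>X. r a x * r b x)) \<noteq> 0 \<longleftrightarrow>
    (\<forall>c. (\<forall>x\<in>X. (\<Sum>a<m. c a * r a x) = 0) \<longrightarrow> (\<forall>a<m. c a = 0))"
proof -
  define G where "G = mat m m (\<lambda>(a, b). \<Sum>x\<in>X. r a x * r b x)"
  define comb where "comb v x = (\<Sum>a<m. v $ a * r a x)" for v x
  have G_vec: "(G *\<^sub>v v) $ a = (\<Sum>x\<in>X. r a x * comb v x)"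
    if "a < m" "v \<in> carrier_vec m" for a v
  proof -
    have "(G *\<^sub>v v) $ a = (\<Sum>b<m. (\<Sum>x\<in>X. r a x * r b x) * v $ b)"
      using that unfolding G_def by (simp add: scalar_prod_def atLeast0LessThan)
    also have "\<dots> = (\<Sum>x\<in>X. \<Sum>b<m. r a x * (v $ b * r b x))"
      by (subst sum.swap) (simp add: sum_distrib_left sum_distrib_right mult_ac)
    finally show ?thesis
      unfolding comb_def by (simp add: sum_distrib_left)
  qed
  have kernel: "G *\<^sub>v v = 0\<^sub>v m \<longleftrightarrow> (\<forall>x\<in>X. comb v x = 0)" if "v \<in> carrier_vec m" for v
  proof
    assume "G *\<^sub>v v = 0\<^sub>v m"
    then have "0 = (\<Sum>a<m. v $ a * (G *\<^sub>v v) $ a)"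
      by simp
    also have "\<dots> = (\<Sum>a<m. v $ a * (\<Sum>x\<in>X. r a x * comb v x))"
      using that by (simp add: G_vec)
    also have "\<dots> = (\<Sum>a<m. \<Sum>x\<in>X. v $ a * r a x * comb v x)"
      by (simp add: sum_distrib_left mult_ac)
    also have "\<dots> = (\<Sum>x\<in>X. (comb v x)\<^sup>2)"
      by (subst sum.swap) (simp add: comb_def power2_eq_square sum_distrib_right)
    finally show "\<forall>x\<in>X. comb v x = 0"
      using sum_nonneg_eq_0_iff[OF assms, of "\<lambda>x. (comb v x)\<^sup>2"] by simp
  next
    assume "\<forall>x\<in>X. comb v x = 0"
    then show "G *\<^sub>v v = 0\<^sub>v m"
      using that by (intro eq_vecI) (simp_all add: G_vec, simp add: G_def)
  qed
  have G: "G \<in> carrier_mat m m"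
    unfolding G_def by simp
  show ?thesis
    unfolding G_def[symmetric]
  proof
    assume det: "det G \<noteq> 0"
    show "\<forall>c. (\<forall>x\<in>X. (\<Sum>a<m. c a * r a x) = 0) \<longrightarrow> (\<forall>a<m. c a = 0)"
    proof (intro allI impI)
      fix c :: "nat \<Rightarrow> real" and a
      assume "\<forall>x\<in>X. (\<Sum>a<m. c a * r a x) = 0" and a: "a < m"
      then have "G *\<^sub>v vec m c = 0\<^sub>v m"
        using kernel[of "vec m c"] by (simp add: comb_def)
      moreover have "vec m c \<in> carrier_vec m"
        by simp
      ultimately have "vec m c = 0\<^sub>v m"
        using det det_0_iff_vec_prod_zero[OF G] by blast
      then show "c a = 0"
        using a by (metis index_vec index_zero_vec(1))
    qed
  next
    assume indep: "\<forall>c. (\<forall>x\<in>X. (\<Sum>a<m. c a * r a x) = 0) \<longrightarrow> (\<forall>a<m. c a = 0)"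
    show "det G \<noteq> 0"
    proof
      assume "det G = 0"
      then obtain v where v: "v \<in> carrier_vec m" "v \<noteq> 0\<^sub>v m" "G *\<^sub>v v = 0\<^sub>v m"
        using det_0_iff_vec_prod_zero[OF G] by blast
      then have "\<forall>a<m. v $ a = 0"
        using indep kernel[OF v(1)] unfolding comb_def by blast
      then show False
        using v(1,2) by (metis carrier_vecD eq_vecI index_zero_vec(1,2))
    qed
  qed
qed

lemma rig_row_line:
  "rig_row (\<lambda>w i. p w i + s * q w i) e w i = rig_row p e w i + s * rig_row q e w i"
  unfolding rig_row_def by (simp add: algebra_simps)

text \<open>Along a line of frameworks the Gram determinant of the rows is a polynomial in the line
  parameter, so independence either fails everywhere or only at finitely many points.\<close>

lemma rows_indep_on_line_cofinite:
  assumes "finite F" "\<forall>e\<in>F. finite e" and indep: "rows_indep_on W d (\<lambda>w i. p w i + s\<^sub>0 * q w i) F"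
  shows "finite {s. \<not> rows_indep_on W d (\<lambda>w i. p w i + s * q w i) F}"
proof -
  obtain es where es: "distinct es" "set es = F"
    using finite_distinct_list[OF assms(1)] by blast
  define m where "m = length es"
  define X where "X = (W \<inter> \<Union>F) \<times> {..<d}"
  have "finite X"
    using assms(1,2) unfolding X_def by auto
  define \<alpha> where "\<alpha> a x = rig_row p (es ! a) (fst x) (snd x)" for a x
  define \<beta> where "\<beta> a x = rig_row q (es ! a) (fst x) (snd x)" for a x
  define Q where "Q = mat m m (\<lambda>(a, b). \<Sum>x\<in>X. [:\<alpha> a x, \<beta> a x:] * [:\<alpha> b x, \<beta> b x:])"
  have indep_iff: "rows_indep_on W d (\<lambda>w i. p w i + s * q w i) F \<longleftrightarrow> poly (det Q) s \<noteq> 0" for s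
  proof -
    interpret eval: comm_ring_hom "\<lambda>f. poly f s"
      by unfold_locales (auto simp: poly_mult)
    have "map_mat (\<lambda>f. poly f s) Q =
        mat m m (\<lambda>(a, b). \<Sum>x\<in>X. (\<alpha> a x + s * \<beta> a x) * (\<alpha> b x + s * \<beta> b x))"
      unfolding Q_def by (rule eq_matI) (auto simp: poly_sum algebra_simps intro!: sum.cong)
    then have "poly (det Q) s = det (mat m m (\<lambda>(a, b). \<Sum>x\<in>X. (\<alpha> a x + s * \<beta> a x) * (\<alpha> b x + s * \<beta> b x)))"
      using eval.hom_det[of Q] by simp
    then show ?thesis
      using rows_indep_on_iff_nth[OF es(1), of W d "\<lambda>w i. p w i + s * q w i"]
        gram_det_nonzero_iff[OF \<open>finite X\<close>, of m "\<lambda>a x. \<alpha> a x + s * \<beta> a x"]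
      unfolding es(2) m_def[symmetric] X_def[symmetric] \<alpha>_def \<beta>_def rig_row_line by simp
  qed
  then have "det Q \<noteq> 0"
    using indep by auto
  then have "finite {s. poly (det Q) s = 0}"
    by (rule poly_roots_finite)
  then show ?thesis
    using indep_iff by simp
qed


text \<open>Finitely many independence conditions, each satisfiable on its own, hold simultaneously
  for some framework: on the line through a framework satisfying the first ones and one
  satisfying the new one, each condition fails at only finitely many points.\<close>

lemma rows_indep_on_simultaneous:
  assumes "finite C"
    and "\<And>W F. (W, F) \<in> C \<Longrightarrow> finite F \<and> (\<forall>e\<in>F. finite e) \<and> (\<exists>p. rows_indep_on W d p F)"
  shows "\<exists>p. \<forall>(W, F)\<in>C. rows_indep_on W d p F"
  using assms
proof (induction C rule: finite_induct)
  case (insert C\<^sub>0 C)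
  obtain p where p: "\<forall>(W, F)\<in>C. rows_indep_on W d p F"
    using insert.IH insert.prems by blast
  obtain W\<^sub>0 F\<^sub>0 where C\<^sub>0: "C\<^sub>0 = (W\<^sub>0, F\<^sub>0)"
    by fastforce
  obtain p' where p': "rows_indep_on W\<^sub>0 d p' F\<^sub>0"
    using insert.prems[of W\<^sub>0 F\<^sub>0] C\<^sub>0 by auto
  define q where "q w i = p' w i - p w i" for w i
  define bad where "bad W F = {s. \<not> rows_indep_on W d (\<lambda>w i. p w i + s * q w i) F}" for W F
  have "finite (bad W F)" if "(W, F) \<in> insert C\<^sub>0 C" for W F
  proof -
    define s\<^sub>0 where "s\<^sub>0 = (if (W, F) = C\<^sub>0 then 1 else (0::real))"
    have "rows_indep_on W d (\<lambda>w i. p w i + s\<^sub>0 * q w i) F"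
      using that p p' C\<^sub>0 by (auto simp: q_def s\<^sub>0_def)
    then show ?thesis
      using insert.prems[OF that] rows_indep_on_line_cofinite unfolding bad_def by blast
  qed
  then have "finite (\<Union>(W, F)\<in>insert C\<^sub>0 C. bad W F)"
    using insert.hyps(1) by (auto simp: C\<^sub>0)
  then have "\<exists>s. s \<notin> (\<Union>(W, F)\<in>insert C\<^sub>0 C. bad W F)"
    by (rule ex_new_if_finite[OF infinite_UNIV_char_0])
  then obtain s where "s \<notin> (\<Union>(W, F)\<in>insert C\<^sub>0 C. bad W F)" ..
  then have "\<forall>(W, F)\<in>insert C\<^sub>0 C. rows_indep_on W d (\<lambda>w i. p w i + s * q w i) F"
    unfolding bad_def by blast
  then show ?case
    by blast
qed simp

lemma star_rows_indep_on_centre: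
  assumes star: "\<And>e. e \<in> S \<Longrightarrow> \<exists>u. u \<noteq> v \<and> e = {v, u}" and "finite S" "card S \<le> d"
  shows "\<exists>p. rows_indep_on {v} d p S"
proof -
  obtain f where f: "bij_betw f S {..<card S}"
    using ex_bij_betw_finite_nat[OF assms(2)] by (auto simp: atLeast0LessThan)
  define p where "p w i = (if w \<noteq> v \<and> {v, w} \<in> S \<and> i = f {v, w} then -1 else (0::real))" for w i
  have row: "rig_row p e v i = (if i = f e then 1 else 0)" if e: "e \<in> S" for e i
  proof -
    obtain u where u: "u \<noteq> v" "e = {v, u}"
      using star[OF e] by blast
    have "(THE u'. u' \<in> e \<and> u' \<noteq> v) = u"
      unfolding u(2) using u(1) by (intro the_equality) auto
    then show ?thesis
      unfolding rig_row_def p_def using u e by auto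
  qed
  have "rows_indep_on {v} d p S"
    unfolding rows_indep_on_def
  proof (intro conjI allI impI ballI)
    fix c :: "'a set \<Rightarrow> real" and e
    assume zero: "\<forall>w\<in>{v}. \<forall>i<d. (\<Sum>e\<in>S. c e * rig_row p e w i) = 0" and e: "e \<in> S"
    have "f e < d"
      using bij_betwE[OF f] e assms(3) by fastforce
    then have "(\<Sum>e'\<in>S. c e' * rig_row p e' v (f e)) = 0"
      using zero by blast
    moreover have "(\<Sum>e'\<in>S. c e' * rig_row p e' v (f e)) = (\<Sum>e'\<in>S. if e' = e then c e' else 0)"
    proof (rule sum.cong)
      fix e' assume e': "e' \<in> S"
      have "f e = f e' \<longleftrightarrow> e = e'"
        using f e e' unfolding bij_betw_def inj_on_def by blast
      then show "c e' * rig_row p e' v (f e) = (if e' = e then c e' else 0)"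
        using row[OF e'] by auto
    qed simp
    ultimately show "c e = 0"
      using e assms(2) by simp
  qed (use assms(2) in simp)
  then show ?thesis
    by blast
qed

lemma rows_indep_Un_star:
  assumes B: "rows_indep d p B" and S: "rows_indep_on {v} d p S"
    and "\<forall>e\<in>B. v \<notin> e" "B \<inter> S = {}"
  shows "rows_indep d p (B \<union> S)"
  unfolding rows_indep_def
proof (intro conjI allI impI)
  have "finite B" "finite S"
    using B S by (simp_all add: rows_indep_def rows_indep_on_def)
  then show "finite (B \<union> S)"
    by simp
  fix c :: "'a set \<Rightarrow> real"
  assume zero: "\<forall>w i. i < d \<longrightarrow> (\<Sum>e\<in>B \<union> S. c e * rig_row p e w i) = 0"
  have split: "(\<Sum>e\<in>B \<union> S. c e * rig_row p e w i) =
      (\<Sum>e\<in>B. c e * rig_row p e w i) + (\<Sum>e\<in>S. c e * rig_row p e w i)" for w i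
    by (rule sum.union_disjoint) fact+
  have "(\<Sum>e\<in>B. c e * rig_row p e v i) = 0" for i
    using assms(3) by (simp add: rig_row_outside)
  then have "(\<Sum>e\<in>S. c e * rig_row p e v i) = 0" if "i < d" for i
    using zero[rule_format, OF that, of v] split[of v i] by simp
  then have S0: "\<forall>e\<in>S. c e = 0"
    using S unfolding rows_indep_on_def by blast
  then have "(\<Sum>e\<in>B. c e * rig_row p e w i) = 0" if "i < d" for w i
    using zero[rule_format, OF that, of w] split[of w i] by simp
  then have "\<forall>w i. i < d \<longrightarrow> (\<Sum>e\<in>B. c e * rig_row p e w i) = 0"
    by blast
  then have "\<forall>e\<in>B. c e = 0"
    using B unfolding rows_indep_def by blast
  then show "\<forall>e\<in>B \<union> S. c e = 0"
    using S0 by blast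
qed

lemma generic_framework_exists:
  assumes "finite X" "\<forall>e\<in>X. finite e"
  obtains p where "\<And>F. F \<subseteq> X \<Longrightarrow> rig_indep d F \<Longrightarrow> rows_indep d p F"
proof -
  define C where "C = (\<lambda>F. (UNIV :: 'a set, F)) ` {F. F \<subseteq> X \<and> rig_indep d F}"
  have "finite C"
    using assms(1) unfolding C_def by simp
  moreover have "finite F \<and> (\<forall>e\<in>F. finite e) \<and> (\<exists>p. rows_indep_on W d p F)" if "(W, F) \<in> C" for W F
  proof -
    have "W = UNIV" "F \<subseteq> X" "rig_indep d F"
      using that unfolding C_def by auto
    moreover have "finite F"
      using \<open>F \<subseteq> X\<close> assms(1) by (rule finite_subset)
    moreover have "\<forall>e\<in>F. finite e"
      using \<open>F \<subseteq> X\<close> assms(2) by blast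
    ultimately show ?thesis
      unfolding rig_indep_def by (simp add: rows_indep_on_UNIV)
  qed
  ultimately have "\<exists>p. \<forall>(W, F)\<in>C. rows_indep_on W d p F"
    by (rule rows_indep_on_simultaneous)
  then obtain p where p: "\<forall>(W, F)\<in>C. rows_indep_on W d p F" ..
  have "rows_indep d p F" if "F \<subseteq> X" "rig_indep d F" for F
  proof -
    have "(UNIV, F) \<in> C"
      using that unfolding C_def by blast
    then show ?thesis
      using bspec[OF p, of "(UNIV, F)"] by (simp add: rows_indep_on_UNIV)
  qed
  then show ?thesis
    using that by blast
qed

lemma rig_rank_insert_le:
  assumes "finite X" "\<forall>e\<in>insert a X. finite e"
  shows "rig_rank d (insert a X) \<le> rig_rank d X + 1"
proof -
  obtain p where generic: "\<And>F. F \<subseteq> insert a X \<Longrightarrow> rig_indep d F \<Longrightarrow> rows_indep d p F"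
    using generic_framework_exists[where X = "insert a X" and d = d] assms by auto
  have "rig_rank d (insert a X) = fun_vec.dim (insert (row_vector d p a) (row_vector d p ` X))"
    using rig_rank_eq_dim[of "insert a X"] generic assms(1) by simp
  moreover have "rig_rank d X = fun_vec.dim (row_vector d p ` X)"
    using rig_rank_eq_dim[of X] generic assms(1) by blast
  ultimately show ?thesis
    using fun_vec.dim_insert_le[OF finite_imageI[OF assms(1)]] by simp
qed

lemma rig_rank_insert_submodular:
  assumes "finite X" "\<forall>e\<in>insert a (insert b X). finite e"
  shows "rig_rank d (insert a (insert b X)) + rig_rank d X \<le> rig_rank d (insert a X) + rig_rank d (insert b X)"
proof -
  obtain p where generic: "\<And>F. F \<subseteq> insert a (insert b X) \<Longrightarrow> rig_indep d F \<Longrightarrow> rows_indep d p F"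
    using generic_framework_exists[where X = "insert a (insert b X)" and d = d] assms by auto
  have rank: "rig_rank d Y = fun_vec.dim (row_vector d p ` Y)" if Y: "Y \<subseteq> insert a (insert b X)" for Y
    using finite_subset[OF Y] assms(1) generic Y by (intro rig_rank_eq_dim) auto
  show ?thesis
    using fun_vec.dim_insert_submodular[OF finite_imageI[OF assms(1)], of "row_vector d p a" "row_vector d p b"]
    by (simp add: rank subset_insertI2 insert_mono)
qed

lemma rig_rank_Un_star_ge:
  assumes "finite H" "\<forall>e\<in>H. finite e" "\<forall>e\<in>H. v \<notin> e"
    and star: "\<And>e. e \<in> S \<Longrightarrow> \<exists>u. u \<noteq> v \<and> e = {v, u}" and "finite S" "card S \<le> d"
  shows "rig_rank d H + card S \<le> rig_rank d (H \<union> S)"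
proof -
  obtain B where B: "B \<subseteq> H" "rig_indep d B" "card B = rig_rank d H"
    using rig_rank_attained[OF assms(1)] .
  have "finite B"
    using B(1) assms(1) by (rule finite_subset)
  have "B \<inter> S = {}"
  proof (rule equals0I)
    fix e assume "e \<in> B \<inter> S"
    then have "v \<notin> e" "v \<in> e"
      using B(1) assms(3) star by auto
    then show False
      by simp
  qed
  have conds: "finite F \<and> (\<forall>e\<in>F. finite e) \<and> (\<exists>p. rows_indep_on W d p F)"
    if "(W, F) \<in> {(UNIV, B), ({v}, S)}" for W F
  proof (cases "(W, F) = (UNIV, B)")
    case True
    then show ?thesis
      using \<open>finite B\<close> B(1,2) assms(2) unfolding rig_indep_def by (auto simp: rows_indep_on_UNIV)
  next
    case False
    then have "W = {v}" "F = S"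
      using that by auto
    moreover have "\<forall>e\<in>S. finite e"
      using star by fastforce
    ultimately show ?thesis
      using star_rows_indep_on_centre[OF star assms(5,6)] assms(5) by simp
  qed
  have "\<exists>p. \<forall>(W, F)\<in>{(UNIV, B), ({v}, S)}. rows_indep_on W d p F"
    by (rule rows_indep_on_simultaneous[OF _ conds]) simp_all
  then obtain p where "rows_indep_on UNIV d p B" "rows_indep_on {v} d p S"
    by auto
  then have "rows_indep d p (B \<union> S)"
    using assms(3) B(1) \<open>B \<inter> S = {}\<close> by (intro rows_indep_Un_star) (auto simp: rows_indep_on_UNIV)
  then have "rig_indep d (B \<union> S)"
    unfolding rig_indep_def by blast
  then have "card (B \<union> S) \<le> rig_rank d (H \<union> S)"
    using B(1) assms(1,5) by (intro card_le_rig_rank) auto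
  then show ?thesis
    using B(3) card_Un_disjoint[OF \<open>finite B\<close> assms(5) \<open>B \<inter> S = {}\<close>] by simp
qed

section \<open>Adding the edges at a vertex\<close>

definition neighbours :: "'a set set \<Rightarrow> 'a \<Rightarrow> 'a set" where
  "neighbours E v = {u. {v, u} \<in> E}"

definition star_edges :: "'a set set \<Rightarrow> 'a \<Rightarrow> 'a set \<Rightarrow> 'a set set" where
  "star_edges E v U = {e \<in> inc_edges E v. \<exists>u\<in>U. e = {v, u}}"

definition star_rank_gain :: "nat \<Rightarrow> 'a set set \<Rightarrow> 'a \<Rightarrow> 'a set \<Rightarrow> real" where
  "star_rank_gain d E v U =
     real (rig_rank d ((E - inc_edges E v) \<union> star_edges E v U)) - real (rig_rank d (E - inc_edges E v))"

lemma rc_star_eq_ordering_mean: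
  "rc_star d V E v = ordering_mean V (\<lambda>\<pi>. star_rank_gain d E v (preceding \<pi> v))"
  unfolding rc_star_def ordering_mean_def rc_star_pi_def star_rank_gain_def star_edges_def
    inc_edges_pi_def ..

lemma is_graph_finite:
  assumes "is_graph V E"
  shows "finite E" "\<forall>e\<in>E. finite e"
proof -
  have "E \<subseteq> Pow V" "finite V"
    using assms unfolding is_graph_def by auto
  then show "finite E"
    by (meson finite_Pow_iff finite_subset)
  show "\<forall>e\<in>E. finite e"
    using assms unfolding is_graph_def by (metis card.infinite zero_neq_numeral)
qed

lemma inc_edges_eq_doubleton:
  assumes "is_graph V E" "e \<in> inc_edges E v"
  shows "\<exists>u. u \<noteq> v \<and> e = {v, u}"
proof -
  have "card e = 2" "v \<in> e"
    using assms unfolding is_graph_def inc_edges_def by auto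
  then show ?thesis
    by (metis card_2_iff doubleton_eq_iff insertE singletonD)
qed

lemma neighbours_subset: "is_graph V E \<Longrightarrow> neighbours E v \<subseteq> V"
  unfolding is_graph_def neighbours_def by auto

lemma not_in_neighbours: "is_graph V E \<Longrightarrow> v \<notin> neighbours E v"
  unfolding is_graph_def neighbours_def by fastforce

lemma star_edges_insert:
  "a \<in> neighbours E v \<Longrightarrow> star_edges E v (insert a U) = insert {v, a} (star_edges E v U)"
  unfolding star_edges_def neighbours_def inc_edges_def by auto

lemma star_edges_Int_neighbours: "star_edges E v (U \<inter> neighbours E v) = star_edges E v U"
  unfolding star_edges_def neighbours_def inc_edges_def by auto

lemma star_edges_subset: "star_edges E v U \<subseteq> inc_edges E v"
  unfolding star_edges_def by auto

lemma star_edges_neighbours: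
  "is_graph V E \<Longrightarrow> star_edges E v (neighbours E v) = inc_edges E v"
  using inc_edges_eq_doubleton unfolding star_edges_def neighbours_def inc_edges_def by fastforce

lemma card_star_edges:
  assumes "is_graph V E" "U \<subseteq> neighbours E v"
  shows "card (star_edges E v U) = card U"
proof -
  have "star_edges E v U = (\<lambda>u. {v, u}) ` U"
    using assms(2) unfolding star_edges_def neighbours_def inc_edges_def by auto
  moreover have "inj_on (\<lambda>u. {v, u}) U"
    using assms not_in_neighbours by (fastforce simp: inj_on_def doubleton_eq_iff)
  ultimately show ?thesis
    by (simp add: card_image)
qed

lemma degree_eq_card_neighbours: "is_graph V E \<Longrightarrow> degree E v = card (neighbours E v)"
  unfolding degree_def
  using card_star_edges[of V E "neighbours E v" v] star_edges_neighbours[of V E v] by simp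

lemma star_rank_gain_Int_neighbours:
  "star_rank_gain d E v (U \<inter> neighbours E v) = star_rank_gain d E v U"
  unfolding star_rank_gain_def star_edges_Int_neighbours ..

lemma star_rank_gain_empty: "star_rank_gain d E v {} = 0"
  unfolding star_rank_gain_def star_edges_def by simp

lemma star_rank_gain_neighbours:
  "is_graph V E \<Longrightarrow> star_rank_gain d E v (neighbours E v) =
     real (rig_rank d E) - real (rig_rank d (E - inc_edges E v))"
  unfolding star_rank_gain_def star_edges_neighbours
  by (simp add: Un_absorb2 inc_edges_def Un_Diff_cancel2)

lemma finite_star_extension:
  assumes "is_graph V E"
  shows "finite ((E - inc_edges E v) \<union> star_edges E v U)"
    "\<forall>e\<in>insert {v, a} (insert {v, b} ((E - inc_edges E v) \<union> star_edges E v U)). finite e"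
  using is_graph_finite[OF assms] star_edges_subset[of E v U]
  by (auto simp: inc_edges_def intro: finite_subset)

lemma star_rank_gain_insert_le:
  assumes "is_graph V E" "a \<in> neighbours E v"
  shows "star_rank_gain d E v (insert a T) \<le> star_rank_gain d E v T + 1"
proof -
  let ?H = "(E - inc_edges E v) \<union> star_edges E v T"
  have "rig_rank d (insert {v, a} ?H) \<le> rig_rank d ?H + 1"
    using finite_star_extension(1)[OF assms(1), where v = v and U = T]
      finite_star_extension(2)[OF assms(1), where v = v and U = T and a = a and b = a]
    by (intro rig_rank_insert_le) auto
  then show ?thesis
    unfolding star_rank_gain_def star_edges_insert[OF assms(2)] by simp
qed

lemma star_rank_gain_submodular:
  assumes "is_graph V E" "a \<in> neighbours E v" "b \<in> neighbours E v"
  shows "star_rank_gain d E v (insert a (insert b T)) + star_rank_gain d E v T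
    \<le> star_rank_gain d E v (insert a T) + star_rank_gain d E v (insert b T)"
proof -
  let ?H = "(E - inc_edges E v) \<union> star_edges E v T"
  have "rig_rank d (insert {v, a} (insert {v, b} ?H)) + rig_rank d ?H
      \<le> rig_rank d (insert {v, a} ?H) + rig_rank d (insert {v, b} ?H)"
    using finite_star_extension(1)[OF assms(1), where v = v and U = T]
      finite_star_extension(2)[OF assms(1), where v = v and U = T and a = a and b = b]
    by (intro rig_rank_insert_submodular) auto
  then show ?thesis
    unfolding star_rank_gain_def star_edges_insert[OF assms(2)] star_edges_insert[OF assms(3)]
    by simp
qed

lemma star_rank_gain_ge_card:
  assumes "is_graph V E" "U \<subseteq> neighbours E v" "card U \<le> d"
  shows "real (card U) \<le> star_rank_gain d E v U"
proof -
  have "rig_rank d (E - inc_edges E v) + card (star_edges E v U)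
      \<le> rig_rank d ((E - inc_edges E v) \<union> star_edges E v U)"
  proof (rule rig_rank_Un_star_ge)
    show "finite (E - inc_edges E v)" "\<forall>e\<in>E - inc_edges E v. finite e"
      using is_graph_finite[OF assms(1)] by auto
    show "\<forall>e\<in>E - inc_edges E v. v \<notin> e"
      unfolding inc_edges_def by auto
    show "\<exists>u. u \<noteq> v \<and> e = {v, u}" if "e \<in> star_edges E v U" for e
      using star_edges_subset[of E v U] that by (intro inc_edges_eq_doubleton[OF assms(1)]) blast
    show "finite (star_edges E v U)"
      by (rule finite_subset[OF _ is_graph_finite(1)[OF assms(1)]])
        (auto simp: star_edges_def inc_edges_def)
    show "card (star_edges E v U) \<le> d"
      using card_star_edges[OF assms(1,2)] assms(3) by simp
  qed
  then show ?thesis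
    unfolding star_rank_gain_def card_star_edges[OF assms(1,2)] by linarith
qed

theorem lemma3p8:
  fixes V :: "'a set" and E :: "'a set set" and v :: 'a and d :: nat and t :: real
  assumes "is_graph V E" and "v \<in> V" and "d \<ge> 1" and "t \<ge> 0"
    and "real (rig_rank d E) \<ge> real (rig_rank d (E - inc_edges E v)) + real d + t"
  shows "rc_star d V E v \<ge>
    real d + (t * (real (degree E v) - real d + 1) - real d * (real d + 1))
              / (2 * (real (degree E v) + 1))"
proof -
  have "real d + (t * (real (card (neighbours E v)) - real d + 1) - real d * (real d + 1))
          / (2 * (real (card (neighbours E v)) + 1))
        \<le> ordering_mean V (\<lambda>\<pi>. star_rank_gain d E v (preceding \<pi> v))"
  proof (rule ordering_mean_preceding_ge[where \<Psi> = "star_rank_gain d E v"])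
    show "finite V"
      using assms(1) by (simp add: is_graph_def)
    show "neighbours E v \<subseteq> V" "v \<notin> neighbours E v"
      using assms(1) by (rule neighbours_subset, rule not_in_neighbours)
    show "star_rank_gain d E v U = star_rank_gain d E v (U \<inter> neighbours E v)" for U
      by (simp add: star_rank_gain_Int_neighbours)
    show "star_rank_gain d E v (insert a T) \<le> star_rank_gain d E v T + 1"
      if "T \<subseteq> neighbours E v" "a \<in> neighbours E v" for T a
      using assms(1) that(2) by (rule star_rank_gain_insert_le)
    show "star_rank_gain d E v (insert a (insert b T)) + star_rank_gain d E v T
        \<le> star_rank_gain d E v (insert a T) + star_rank_gain d E v (insert b T)"
      if "T \<subseteq> neighbours E v" "a \<in> neighbours E v" "b \<in> neighbours E v" for T a b
      using assms(1) that(2,3) by (rule star_rank_gain_submodular)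
    show "real (card U) \<le> star_rank_gain d E v U"
      if "U \<subseteq> neighbours E v" "card U \<le> d" for U
      using assms(1) that by (rule star_rank_gain_ge_card)
    show "real d + t \<le> star_rank_gain d E v (neighbours E v)"
      using assms(5) star_rank_gain_neighbours[OF assms(1)] by simp
  qed (fact star_rank_gain_empty assms(2,4))+
  then show ?thesis
    by (simp add: rc_star_eq_ordering_mean degree_eq_card_neighbours[OF assms(1)])
qed

end
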